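(* Fix $p\in(\tfrac12,1)$ and let $\{B_n\}_{n\ge1}$ be a sequence with $B_n\in\{1,\dots,n\}$ and $\lim_{n\to\infty}B_n/n=q$ for some $q\in[0,1]$. Then $$\lim_{n\to\infty}\lambda(B_n,n)=\begin{cases}0 & \text{if } q\le 1-p,\\ \dfrac{q-(1-p)}{p} & \text{otherwise.}\end{cases}$$
   Context: The crowdfunding game $\Gamma(B,n)$ with parameter $p\in(\tfrac12,1)$: there are $n$ players and a threshold $B\in\{1,\dots,n\}$. A state $\omega\in\{H,L\}$ is drawn with probability $\tfrac12$ each. Conditional on $\omega$, each player $i$ independently receives a signal $s_i\in\{H,L\}$ with $\Pr(s_i=\omega\mid\omega)=p$. Players simultaneously choose $a_i\in\{0,1\}$. Player $i$'s payoff is $1$ if $a_i=1$, $\sum_j a_j\ge B$ and $\omega=H$; $-1$ if $a_i=1$, $\sum_j a_j\ge B$ and $\omega=L$; and $0$ otherwise. A strategy is a map $\sigma_i:\{H,L\}\to[0,1]$ giving the probability of action $1$ after each signal; Bayes-Nash equilibrium is defined as usual. A profile is non-trivial if $\Pr_\sigma(\sum_i a_i\ge B)>0$, and symmetric if all players use the same strategy. It is known that each $\Gamma(B,n)$ has a unique symmetric non-trivial Bayes-Nash equilibrium, and in it every player plays $1$ with probability $1$ after signal $H$ and plays $1$ with probability $\lambda(B,n)\in[0,1)$ after signal $L$; this defines $\lambda(B,n)$. *)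

theory Defs
  imports "HOL-Analysis.Analysis"
begin

(* Crowdfunding game Gamma(B,n) with signal precision p.
   Encoding: states and signals are bool, True = H, False = L. A strategy profile is sg :: nat => bool => real,
   sg i s = probability that player i plays action 1 after signal s. *)

definition strat :: "(bool \<Rightarrow> real) \<Rightarrow> bool" where
  "strat f \<longleftrightarrow> (\<forall>s. 0 \<le> f s \<and> f s \<le> 1)"

definition cf_prob :: "real \<Rightarrow> nat \<Rightarrow> (nat \<Rightarrow> bool \<Rightarrow> real) \<Rightarrow> bool \<Rightarrow> (nat \<Rightarrow> bool) \<Rightarrow> (nat \<Rightarrow> bool) \<Rightarrow> real" where
  "cf_prob p n sg w s a =
     (1/2) * (\<Prod>i<n. if s i = w then p else 1 - p)
           * (\<Prod>i<n. if a i then sg i (s i) else 1 - sg i (s i))"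

definition cf_payoff :: "nat \<Rightarrow> nat \<Rightarrow> nat \<Rightarrow> bool \<Rightarrow> (nat \<Rightarrow> bool) \<Rightarrow> real" where
  "cf_payoff B n i w a =
     (if a i \<and> B \<le> card {j\<in>{..<n}. a j} then (if w then 1 else -1) else 0)"

definition profiles :: "nat \<Rightarrow> (nat \<Rightarrow> bool) set" where
  "profiles n = PiE {..<n} (\<lambda>_. UNIV)"

definition cf_EU :: "real \<Rightarrow> nat \<Rightarrow> nat \<Rightarrow> (nat \<Rightarrow> bool \<Rightarrow> real) \<Rightarrow> nat \<Rightarrow> real" where
  "cf_EU p B n sg i =
     (\<Sum>w\<in>UNIV. \<Sum>s\<in>profiles n. \<Sum>a\<in>profiles n.
        cf_prob p n sg w s a * cf_payoff B n i w a)"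

definition cf_BNE :: "real \<Rightarrow> nat \<Rightarrow> nat \<Rightarrow> (nat \<Rightarrow> bool \<Rightarrow> real) \<Rightarrow> bool" where
  "cf_BNE p B n sg \<longleftrightarrow>
     (\<forall>i<n. strat (sg i)) \<and>
     (\<forall>i<n. \<forall>t. strat t \<longrightarrow> cf_EU p B n (sg(i := t)) i \<le> cf_EU p B n sg i)"

definition cf_nontrivial :: "real \<Rightarrow> nat \<Rightarrow> nat \<Rightarrow> (nat \<Rightarrow> bool \<Rightarrow> real) \<Rightarrow> bool" where
  "cf_nontrivial p B n sg \<longleftrightarrow>
     (\<Sum>w\<in>UNIV. \<Sum>s\<in>profiles n. \<Sum>a\<in>{a\<in>profiles n. B \<le> card {j\<in>{..<n}. a j}}.
        cf_prob p n sg w s a) > 0"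

definition sym_nt_BNE :: "real \<Rightarrow> nat \<Rightarrow> nat \<Rightarrow> (bool \<Rightarrow> real) \<Rightarrow> bool" where
  "sym_nt_BNE p B n f \<longleftrightarrow>
     cf_BNE p B n (\<lambda>_. f) \<and> cf_nontrivial p B n (\<lambda>_. f)"

(* lambda(B,n): probability of action 1 after signal L in the (unique)
   symmetric non-trivial BNE *)
definition cf_lambda :: "real \<Rightarrow> nat \<Rightarrow> nat \<Rightarrow> real" where
  "cf_lambda p B n = (THE f. sym_nt_BNE p B n f) False"

end

(*
  In a symmetric non-trivial equilibrium every player contributes after signal H, and the
  probability b of contributing after L is pinned down by the sign of the gain from contributing
  after L, (1 - p) Q(p + (1 - p) b) - p Q(1 - p + p b), where Q(r) is the probability that at least
  B - 1 of the other n - 1 players contribute when each does so with probability r.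
  Log-concavity of the binomial tail Q makes this gain change sign at most once, which gives
  uniqueness. For large n, Hoeffding's inequality turns Q(r) into the indicator of r > q, so in
  the limit the contribution probability in state L, 1 - p + p b, must equal q, i.e.
  b -> (q - (1 - p))/p, unless even b = 0 overshoots q. When q = 1 both tails vanish, and a
  likelihood-ratio bound on Q(1 - p + p b) / Q(p + (1 - p) b) takes the place of Hoeffding.
*)
theory Submission
  imports Defs "HOL-Probability.Hoeffding"
begin

section \<open>Binomial tails\<close>

definition binomial_tail :: "nat \<Rightarrow> nat \<Rightarrow> real \<Rightarrow> real" where
  "binomial_tail m k r = (\<Sum>j=k..m. real (m choose j) * r^j * (1-r)^(m-j))"

lemma binomial_tail_eq_prob:
  assumes "0 \<le> r" "r \<le> 1"
  shows "binomial_tail m k r = measure_pmf.prob (binomial_pmf m r) {x. k \<le> x}"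
proof -
  have "measure_pmf.prob (binomial_pmf m r) {x. k \<le> x} = measure_pmf.prob (binomial_pmf m r) {k..m}"
    by (rule measure_prob_cong_0) (use assms in auto)
  also have "\<dots> = (\<Sum>j\<in>{k..m}. pmf (binomial_pmf m r) j)"
    by (rule measure_measure_pmf_finite) simp
  finally show ?thesis
    unfolding binomial_tail_def using assms by simp
qed

lemma binomial_tail_nonneg: "0 \<le> r \<Longrightarrow> r \<le> 1 \<Longrightarrow> 0 \<le> binomial_tail m k r"
  by (simp add: binomial_tail_eq_prob)

lemma binomial_tail_le_1: "0 \<le> r \<Longrightarrow> r \<le> 1 \<Longrightarrow> binomial_tail m k r \<le> 1"
  by (simp add: binomial_tail_eq_prob)

lemma binomial_tail_0 [simp]: "binomial_tail m 0 r = 1"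
proof -
  have "binomial_tail m 0 r = (\<Sum>j\<le>m. real (m choose j) * r^j * (1-r)^(m-j))"
    unfolding binomial_tail_def by (rule sum.cong) auto
  also have "\<dots> = (r + (1-r))^m"
    by (rule binomial_ring[symmetric])
  finally show ?thesis by simp
qed

lemma binomial_tail_at_0: "1 \<le> k \<Longrightarrow> binomial_tail m k 0 = 0"
  unfolding binomial_tail_def by (intro sum.neutral) auto

lemma binomial_tail_at_1:
  assumes "k \<le> m"
  shows "binomial_tail m k 1 = 1"
proof -
  have "binomial_tail m k 1 = (\<Sum>j\<in>{k..m}. if j = m then 1 else 0)"
    unfolding binomial_tail_def by (rule sum.cong) auto
  with assms show ?thesis by simp
qed

lemma binomial_tail_pos:
  assumes "k \<le> m" "0 < r" "r \<le> 1"
  shows "0 < binomial_tail m k r"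
proof -
  have "0 < real (m choose m) * r^m * (1-r)^(m-m)"
    using assms by simp
  also have "\<dots> \<le> binomial_tail m k r"
    unfolding binomial_tail_def by (rule member_le_sum) (use assms in auto)
  finally show ?thesis .
qed

lemma continuous_on_binomial_tail: "continuous_on S (binomial_tail m k)"
  unfolding binomial_tail_def[abs_def] by (intro continuous_intros)

definition binomial_density :: "nat \<Rightarrow> nat \<Rightarrow> real \<Rightarrow> real" where
  "binomial_density m k r = real k * real (m choose k) * r^(k-1) * (1-r)^(m-k)"

lemma binomial_density_nonneg: "0 \<le> r \<Longrightarrow> r \<le> 1 \<Longrightarrow> 0 \<le> binomial_density m k r"
  unfolding binomial_density_def by simp

lemma binomial_density_pos:
  "1 \<le> k \<Longrightarrow> k \<le> m \<Longrightarrow> 0 < r \<Longrightarrow> r < 1 \<Longrightarrow> 0 < binomial_density m k r"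
  unfolding binomial_density_def by simp

lemma binomial_term_has_real_derivative:
  "((\<lambda>r. real (m choose j) * r^j * (1-r)^(m-j)) has_real_derivative
     binomial_density m j r - binomial_density m (Suc j) r) (at r)"
proof -
  have "Suc j * (m choose Suc j) = (m - j) * (m choose j)"
    using binomial_absorption[of j m] binomial_absorb_comp[of m j] by simp
  then have "real (Suc j) * real (m choose Suc j) = real (m - j) * real (m choose j)"
    by (metis of_nat_mult)
  then have c: "real (m choose j) * real (m - j) = real (m choose Suc j) + real j * real (m choose Suc j)"
    by (simp add: algebra_simps)
  show ?thesis
    unfolding binomial_density_def
    by (rule derivative_eq_intros refl | simp)+ (simp add: c algebra_simps Suc_diff_Suc)
qed

lemma binomial_tail_has_real_derivative:
  assumes "k \<le> m"
  shows "(binomial_tail m k has_real_derivative binomial_density m k r) (at r)"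
proof -
  let ?D = "\<lambda>j. binomial_density m j r"
  have "(binomial_tail m k has_real_derivative (\<Sum>j=k..m. ?D j - ?D (Suc j))) (at r)"
    unfolding binomial_tail_def[abs_def]
    by (rule DERIV_sum) (rule binomial_term_has_real_derivative)
  moreover have "(\<Sum>j=k..m. ?D j - ?D (Suc j)) = ?D k"
  proof -
    have "(\<Sum>j=k..m. ?D j - ?D (Suc j)) = - (\<Sum>j=k..<Suc m. ?D (Suc j) - ?D j)"
      by (simp add: atLeastLessThanSuc_atLeastAtMost sum_negf[symmetric])
    also have "\<dots> = ?D k - ?D (Suc m)"
      using assms by (subst sum_Suc_diff') auto
    finally show ?thesis
      by (simp add: binomial_density_def)
  qed
  ultimately show ?thesis by simp
qed

lemma binomial_tail_mono:
  assumes "k \<le> m" "0 \<le> r1" "r1 \<le> r2" "r2 \<le> 1"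
  shows "binomial_tail m k r1 \<le> binomial_tail m k r2"
proof (rule DERIV_nonneg_imp_increasing_open[OF \<open>r1 \<le> r2\<close> _ continuous_on_binomial_tail])
  fix x assume "r1 < x" "x < r2"
  then show "\<exists>y. (binomial_tail m k has_real_derivative y) (at x) \<and> 0 \<le> y"
    using binomial_tail_has_real_derivative[OF \<open>k \<le> m\<close>, of x]
      binomial_density_nonneg[of x m k] assms by auto
qed

lemma of_nat_mult_power_pred:
  fixes x :: "'a::field"
  assumes "x \<noteq> 0"
  shows "of_nat n * x^(n - 1) = of_nat n * x^n / x"
  using assms by (cases n) simp_all

definition binomial_density_log_deriv :: "nat \<Rightarrow> nat \<Rightarrow> real \<Rightarrow> real" where
  "binomial_density_log_deriv m k r = real (k - 1) / r - real (m - k) / (1 - r)"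

lemma binomial_density_has_real_derivative:
  assumes "0 < r" "r < 1"
  shows "(binomial_density m k has_real_derivative
           binomial_density_log_deriv m k r * binomial_density m k r) (at r)"
proof -
  have "(binomial_density m k has_real_derivative
      real k * real (m choose k) * (real (k - 1) * r ^ (k - 1 - 1) * (1-r)^(m-k)
         - r^(k-1) * (real (m - k) * (1 - r) ^ (m - k - 1)))) (at r)"
    unfolding binomial_density_def[abs_def]
    by (rule derivative_eq_intros refl | simp)+ (simp add: algebra_simps)
  moreover have "real (k - 1) * r ^ (k - 1 - 1) = real (k - 1) * r ^ (k - 1) / r"
    "real (m - k) * (1 - r) ^ (m - k - 1) = real (m - k) * (1 - r) ^ (m - k) / (1 - r)"
    using assms of_nat_mult_power_pred[of r "k - 1"] of_nat_mult_power_pred[of "1 - r" "m - k"]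
    by (simp_all only: diff_diff_left)
  ultimately show ?thesis
    using assms by (simp only:) (simp add: binomial_density_log_deriv_def binomial_density_def field_simps)
qed

lemma continuous_on_binomial_density: "continuous_on S (binomial_density m k)"
  unfolding binomial_density_def[abs_def] by (intro continuous_intros)

text \<open>Write \<open>Q\<close>, \<open>\<phi> = Q'\<close> and \<open>\<psi> = (ln \<phi>)'\<close> for \<open>binomial_tail m k\<close>,
  \<open>binomial_density m k\<close> and \<open>binomial_density_log_deriv m k\<close>. Near \<open>0\<close> the bound \<open>\<psi> Q \<le> \<phi>\<close>
  follows from \<open>W t = t \<phi> t - (k - 1) Q t\<close>, which vanishes at \<open>0\<close> and is nondecreasing as long as
  \<open>t (m - k) \<le> 1 - t\<close>; further out, \<open>\<phi> - \<psi> Q\<close> has the nonnegative derivative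
  \<open>((k - 1)/r\<^sup>2 + (m - k)/(1 - r)\<^sup>2) Q\<close>.\<close>

lemma binomial_tail_density_bound_near_0:
  assumes "1 \<le> k" "k \<le> m" and t: "0 < t" "t < 1" "t * (real (m - k) + 1) \<le> 1"
  shows "binomial_density_log_deriv m k t * binomial_tail m k t \<le> binomial_density m k t"
proof -
  define W where "W = (\<lambda>t. t * binomial_density m k t - real (k - 1) * binomial_tail m k t)"
  have "W 0 \<le> W t"
  proof (rule DERIV_nonneg_imp_increasing_open[of 0 t W])
    show "continuous_on {0..t} W"
      unfolding W_def by (intro continuous_intros continuous_on_binomial_density
          continuous_on_binomial_tail)
    fix x assume x: "0 < x" "x < t"
    then have x1: "x < 1" using t by simp
    have "((\<lambda>t. t * binomial_density m k t) has_real_derivative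
        1 * binomial_density m k x + binomial_density_log_deriv m k x * binomial_density m k x * x) (at x)"
      by (rule DERIV_mult[OF DERIV_ident binomial_density_has_real_derivative]) (use x x1 in auto)
    from DERIV_diff[OF this DERIV_cmult[OF binomial_tail_has_real_derivative[OF \<open>k \<le> m\<close>],
          of "real (k - 1)"]]
    have W_deriv: "(W has_real_derivative binomial_density m k x * (1 - x * real (m - k) / (1 - x))) (at x)"
      unfolding W_def
      by (rule DERIV_cong) (use x x1 in \<open>simp add: binomial_density_log_deriv_def field_simps\<close>)
    have "x * (real (m - k) + 1) \<le> t * (real (m - k) + 1)"
      by (rule mult_right_mono) (use x in auto)
    then have "0 \<le> 1 - x * real (m - k) / (1 - x)"
      using t x1 by (simp add: field_simps)
    with W_deriv show "\<exists>y. (W has_real_derivative y) (at x) \<and> 0 \<le> y"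
      using binomial_density_nonneg[of x m k] x x1 by fastforce
  qed (use t in simp)
  moreover have "W 0 = 0"
    unfolding W_def using binomial_tail_at_0[OF \<open>1 \<le> k\<close>] by simp
  ultimately have "0 \<le> W t / t"
    using t by simp
  moreover have "0 \<le> real (m - k) * binomial_tail m k t / (1 - t)"
    using t binomial_tail_nonneg[of t m k] by simp
  moreover have "binomial_density m k t - binomial_density_log_deriv m k t * binomial_tail m k t
      = W t / t + real (m - k) * binomial_tail m k t / (1 - t)"
    unfolding W_def binomial_density_log_deriv_def using t by (simp add: field_simps)
  ultimately show ?thesis
    by linarith
qed

lemma binomial_density_gap_has_real_derivative:
  assumes k: "k \<le> m" and x: "0 < x" "x < 1"
  shows "((\<lambda>r. binomial_density m k r - binomial_density_log_deriv m k r * binomial_tail m k r)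
    has_real_derivative (real (k - 1) / x^2 + real (m - k) / (1 - x)^2) * binomial_tail m k x) (at x)"
proof -
  have "(binomial_density_log_deriv m k has_real_derivative
      - real (k - 1) / x^2 - real (m - k) / (1 - x)^2) (at x)"
    unfolding binomial_density_log_deriv_def[abs_def] using x
    by (auto intro!: derivative_eq_intros simp: divide_inverse power2_eq_square)
  from DERIV_mult[OF this binomial_tail_has_real_derivative[OF k]]
  have "((\<lambda>r. binomial_density_log_deriv m k r * binomial_tail m k r) has_real_derivative
      (- real (k - 1) / x^2 - real (m - k) / (1 - x)^2) * binomial_tail m k x
      + binomial_density m k x * binomial_density_log_deriv m k x) (at x)" .
  from DERIV_diff[OF binomial_density_has_real_derivative[OF x, of m k] this]
  show ?thesis
    by (simp add: algebra_simps)
qed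

lemma binomial_tail_density_bound:
  assumes k: "1 \<le> k" "k \<le> m" and r: "0 < r" "r < 1"
  shows "binomial_density_log_deriv m k r * binomial_tail m k r \<le> binomial_density m k r"
proof -
  define G where "G = (\<lambda>r. binomial_density m k r - binomial_density_log_deriv m k r * binomial_tail m k r)"
  define t0 :: real where "t0 = 1 / (real (m - k) + 2)"
  have t0: "0 < t0" "t0 < 1" "t0 * (real (m - k) + 1) \<le> 1"
    by (auto simp: t0_def field_simps)
  note G_deriv = binomial_density_gap_has_real_derivative[OF k(2), folded G_def]
  have "0 \<le> G r"
  proof (cases "r \<le> t0")
    case True
    have "r * (real (m - k) + 1) \<le> t0 * (real (m - k) + 1)"
      using True by (intro mult_right_mono) auto
    with t0 have "r * (real (m - k) + 1) \<le> 1"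
      by linarith
    with binomial_tail_density_bound_near_0[OF k r] show ?thesis
      unfolding G_def by simp
  next
    case False
    have "G t0 \<le> G r"
    proof (rule DERIV_nonneg_imp_increasing_open[of t0 r G])
      show "continuous_on {t0..r} G"
        using t0 r by (intro continuous_at_imp_continuous_on ballI DERIV_isCont[OF G_deriv]) auto
      fix x assume "t0 < x" "x < r"
      with t0 r G_deriv[of x] binomial_tail_nonneg[of x m k]
      show "\<exists>y. (G has_real_derivative y) (at x) \<and> 0 \<le> y" by force
    qed (use False in simp)
    moreover have "0 \<le> G t0"
      unfolding G_def using binomial_tail_density_bound_near_0[OF k t0] by simp
    ultimately show ?thesis by simp
  qed
  then show ?thesis unfolding G_def by simp
qed

text \<open>Log-concavity of the tail: \<open>\<phi>/Q = (ln Q)'\<close> is nonincreasing, since its derivative is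
  \<open>\<phi> (\<psi> Q - \<phi>) / Q\<^sup>2\<close>.\<close>

lemma binomial_tail_log_concave:
  assumes k: "1 \<le> k" "k \<le> m" and r: "0 < r1" "r1 \<le> r2" "r2 < 1"
  shows "binomial_density m k r2 * binomial_tail m k r1 \<le> binomial_density m k r1 * binomial_tail m k r2"
proof -
  define h where "h = (\<lambda>r. binomial_density m k r / binomial_tail m k r)"
  have Q_pos: "0 < binomial_tail m k x" if "0 < x" "x < 1" for x
    using binomial_tail_pos[OF k(2)] that by simp
  have h_deriv: "(h has_real_derivative
      binomial_density m k x * (binomial_density_log_deriv m k x * binomial_tail m k x
        - binomial_density m k x) / (binomial_tail m k x)^2) (at x)"
    if x: "0 < x" "x < 1" for x
    unfolding h_def power2_eq_square
    by (rule DERIV_cong[OF DERIV_divide[OF binomial_density_has_real_derivative[OF x]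
          binomial_tail_has_real_derivative[OF k(2)]]]) (use Q_pos[OF x] in \<open>auto simp: algebra_simps\<close>)
  have "h r2 \<le> h r1"
  proof (rule DERIV_nonpos_imp_decreasing_open[of r1 r2 h])
    show "continuous_on {r1..r2} h"
      using r by (intro continuous_at_imp_continuous_on ballI DERIV_isCont[OF h_deriv]) auto
    fix x assume "r1 < x" "x < r2"
    then have x: "0 < x" "x < 1" using r by auto
    have "binomial_density m k x * (binomial_density_log_deriv m k x * binomial_tail m k x
        - binomial_density m k x) \<le> 0"
      using binomial_tail_density_bound[OF k x] binomial_density_nonneg[of x m k] x
      by (simp add: mult_nonneg_nonpos)
    then show "\<exists>y. (h has_real_derivative y) (at x) \<and> y \<le> 0"
      using h_deriv[OF x] by (blast intro: divide_nonpos_nonneg zero_le_power2)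
  qed (use r in simp)
  then show ?thesis
    unfolding h_def using Q_pos[of r1] Q_pos[of r2] r by (simp add: divide_simps)
qed

lemma binomial_tail_le_exp:
  assumes "0 < m" "0 \<le> r" "r \<le> 1" "0 \<le> d" "real m * (r + d) \<le> real k"
  shows "binomial_tail m k r \<le> exp (-2 * real m * d^2)"
proof -
  interpret binomial_distribution m r
    by unfold_locales (use assms in auto)
  have "binomial_tail m k r \<le> measure_pmf.prob (binomial_pmf m r) {x. real x / real m \<ge> r + d}"
    unfolding binomial_tail_eq_prob[OF assms(2,3)]
    by (rule measure_pmf.finite_measure_mono) (use assms in \<open>auto simp: field_simps\<close>)
  also have "\<dots> \<le> exp (-2 * real m * d^2)"
    using prob_ge'[OF assms(1,4)] by simp
  finally show ?thesis .
qed

lemma binomial_tail_ge_1_minus_exp: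
  assumes "0 < m" "0 \<le> r" "r \<le> 1" "0 \<le> d" "real k \<le> real m * (r - d)"
  shows "1 - exp (-2 * real m * d^2) \<le> binomial_tail m k r"
proof -
  interpret binomial_distribution m r
    by unfold_locales (use assms in auto)
  let ?M = "measure_pmf (binomial_pmf m r)"
  have "measure ?M {x. x < k} \<le> measure ?M {x. real x / real m \<le> r - d}"
    by (rule measure_pmf.finite_measure_mono) (use assms in \<open>auto simp: field_simps\<close>)
  also have "\<dots> \<le> exp (-2 * real m * d^2)"
    using prob_le'[OF assms(1,4)] by simp
  finally have "measure ?M {x. x < k} \<le> exp (-2 * real m * d^2)" .
  moreover have "measure ?M {x. k \<le> x} = 1 - measure ?M {x. x < k}"
  proof -
    have "{x. k \<le> x} = UNIV - {x. x < k}" by auto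
    then show ?thesis
      using measure_pmf.prob_compl[of "{x. x < k}" "binomial_pmf m r"] by simp
  qed
  ultimately show ?thesis
    using binomial_tail_eq_prob[OF assms(2,3)] by simp
qed

lemma tendsto_exp_neg_mult_at_top:
  fixes m :: "'a \<Rightarrow> nat"
  assumes "filterlim m at_top F" "0 < c"
  shows "((\<lambda>x. exp (- c * real (m x))) \<longlongrightarrow> 0) F"
proof -
  have "filterlim (\<lambda>x. real (m x)) at_top F"
    using filterlim_compose[OF filterlim_real_sequentially assms(1)] .
  with assms(2) show ?thesis
    using filterlim_compose[OF exp_at_bot filterlim_tendsto_neg_mult_at_bot[OF tendsto_const]]
    by (metis neg_less_0_iff_less)
qed

lemma binomial_tail_tendsto_0:
  assumes m: "filterlim m at_top F" and km: "((\<lambda>x. real (k x) / real (m x)) \<longlongrightarrow> c) F"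
    and r: "0 \<le> r" "r < c" "r \<le> 1"
  shows "((\<lambda>x. binomial_tail (m x) (k x) r) \<longlongrightarrow> 0) F"
proof (rule tendsto_sandwich)
  define d where "d = (c - r) / 2"
  have d: "0 < d" using r by (simp add: d_def)
  have "eventually (\<lambda>x. r + d < real (k x) / real (m x)) F"
    by (rule order_tendstoD(1)[OF km]) (simp add: d_def field_simps r)
  moreover have "eventually (\<lambda>x. 0 < m x) F"
    using m by (simp add: filterlim_at_top eventually_mono[of "\<lambda>x. 1 \<le> m x"])
  ultimately show "eventually (\<lambda>x. binomial_tail (m x) (k x) r \<le> exp (- (2 * d^2) * real (m x))) F"
  proof eventually_elim
    case (elim x)
    then have "real (m x) * (r + d) \<le> real (k x)"
      by (simp add: field_simps)
    from binomial_tail_le_exp[OF elim(2) r(1,3) less_imp_le[OF d] this]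
    show ?case by (simp add: algebra_simps)
  qed
  show "eventually (\<lambda>x. 0 \<le> binomial_tail (m x) (k x) r) F"
    using r by (simp add: binomial_tail_nonneg)
  show "((\<lambda>x. exp (- (2 * d^2) * real (m x))) \<longlongrightarrow> 0) F"
    by (rule tendsto_exp_neg_mult_at_top[OF m]) (use d in simp)
qed (rule tendsto_const)

lemma binomial_tail_tendsto_1:
  assumes m: "filterlim m at_top F" and km: "((\<lambda>x. real (k x) / real (m x)) \<longlongrightarrow> c) F"
    and r: "0 \<le> r" "c < r" "r \<le> 1"
  shows "((\<lambda>x. binomial_tail (m x) (k x) r) \<longlongrightarrow> 1) F"
proof (rule tendsto_sandwich)
  define d where "d = (r - c) / 2"
  have d: "0 < d" using r by (simp add: d_def)
  have "eventually (\<lambda>x. real (k x) / real (m x) < r - d) F"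
    by (rule order_tendstoD(2)[OF km]) (simp add: d_def field_simps r)
  moreover have "eventually (\<lambda>x. 0 < m x) F"
    using m by (simp add: filterlim_at_top eventually_mono[of "\<lambda>x. 1 \<le> m x"])
  ultimately show "eventually (\<lambda>x. 1 - exp (- (2 * d^2) * real (m x)) \<le> binomial_tail (m x) (k x) r) F"
  proof eventually_elim
    case (elim x)
    then have "real (k x) \<le> real (m x) * (r - d)"
      by (simp add: field_simps)
    from binomial_tail_ge_1_minus_exp[OF elim(2) r(1,3) less_imp_le[OF d] this]
    show ?case by (simp add: algebra_simps)
  qed
  show "eventually (\<lambda>x. binomial_tail (m x) (k x) r \<le> 1) F"
    using r by (simp add: binomial_tail_le_1)
  show "((\<lambda>x. 1 - exp (- (2 * d^2) * real (m x))) \<longlongrightarrow> 1) F"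
    using tendsto_diff[OF tendsto_const tendsto_exp_neg_mult_at_top[OF m, of "2 * d^2"]] d by simp
qed (rule tendsto_const)

text \<open>Termwise, the likelihood ratio \<open>(r\<^sub>1/r\<^sub>2)\<^sup>j ((1-r\<^sub>1)/(1-r\<^sub>2))\<^sup>m\<^sup>-\<^sup>j\<close>
  is largest at \<open>j = k\<close>.\<close>

lemma binomial_tail_ratio_le:
  assumes r: "0 < r1" "r1 \<le> r2" "r2 < 1"
  shows "binomial_tail m k r1 \<le> (r1/r2)^k * ((1-r1)/(1-r2))^(m-k) * binomial_tail m k r2"
proof -
  define c where "c = (r1/r2)^k * ((1-r1)/(1-r2))^(m-k)"
  have "binomial_tail m k r1 \<le> (\<Sum>j=k..m. c * (real (m choose j) * r2^j * (1-r2)^(m-j)))"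
    unfolding binomial_tail_def
  proof (rule sum_mono)
    fix j assume j: "j \<in> {k..m}"
    have "(r1/r2)^j \<le> (r1/r2)^k"
      using r j by (intro power_decreasing) auto
    moreover have "((1-r1)/(1-r2))^(m-j) \<le> ((1-r1)/(1-r2))^(m-k)"
      using r j by (intro power_increasing) (auto simp: field_simps)
    ultimately have "(r1/r2)^j * ((1-r1)/(1-r2))^(m-j) \<le> c"
      unfolding c_def using r by (intro mult_mono) auto
    then have "(r1/r2)^j * ((1-r1)/(1-r2))^(m-j) * (real (m choose j) * r2^j * (1-r2)^(m-j))
        \<le> c * (real (m choose j) * r2^j * (1-r2)^(m-j))"
      by (rule mult_right_mono) (use r in simp)
    then show "real (m choose j) * r1^j * (1-r1)^(m-j) \<le> c * (real (m choose j) * r2^j * (1-r2)^(m-j))"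
      using r by (simp add: power_divide field_simps)
  qed
  also have "\<dots> = c * binomial_tail m k r2"
    unfolding binomial_tail_def by (simp add: sum_distrib_left)
  finally show ?thesis unfolding c_def .
qed

lemma likelihood_ratio_tendsto_0:
  fixes \<rho> \<sigma> :: real
  assumes m: "filterlim m at_top F" and km: "((\<lambda>x. real (k x) / real (m x)) \<longlongrightarrow> 1) F"
    and k_le: "eventually (\<lambda>x. k x \<le> m x) F" and \<rho>: "0 < \<rho>" "\<rho> < 1" and \<sigma>: "0 < \<sigma>"
  shows "((\<lambda>x. \<rho>^k x * \<sigma>^(m x - k x)) \<longlongrightarrow> 0) F"
proof -
  let ?e = "\<lambda>x. real (k x) / real (m x) * ln \<rho> + (1 - real (k x) / real (m x)) * ln \<sigma>"
  have "(?e \<longlongrightarrow> 1 * ln \<rho> + (1 - 1) * ln \<sigma>) F"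
    by (intro tendsto_intros km)
  moreover have "1 * ln \<rho> + (1 - 1) * ln \<sigma> < 0"
    using \<rho> by simp
  ultimately have "filterlim (\<lambda>x. ?e x * real (m x)) at_bot F"
    using filterlim_tendsto_neg_mult_at_bot filterlim_compose[OF filterlim_real_sequentially m] by blast
  then have "((\<lambda>x. exp (?e x * real (m x))) \<longlongrightarrow> 0) F"
    by (rule filterlim_compose[OF exp_at_bot])
  moreover have "eventually (\<lambda>x. 0 < m x) F"
    using m by (simp add: filterlim_at_top eventually_mono[of "\<lambda>x. 1 \<le> m x"])
  then have "eventually (\<lambda>x. exp (?e x * real (m x)) = \<rho>^k x * \<sigma>^(m x - k x)) F"
    using k_le
  proof eventually_elim
    case (elim x)
    then have "?e x * real (m x) = real (k x) * ln \<rho> + real (m x - k x) * ln \<sigma>"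
      by (simp add: of_nat_diff field_simps)
    then show ?case
      using \<rho> \<sigma> by (simp add: exp_add exp_of_nat_mult)
  qed
  ultimately show ?thesis
    by (rule Lim_transform_eventually)
qed

section \<open>The payoff of a unilateral deviation\<close>

lemma sum_PiE_bool_by_card:
  fixes x y :: real and h :: "nat \<Rightarrow> real"
  assumes fin: "finite I"
  shows "(\<Sum>a\<in>PiE I (\<lambda>_. UNIV). (\<Prod>j\<in>I. if a j then x else y) * h (card {j\<in>I. a j}))
        = (\<Sum>j\<le>card I. real (card I choose j) * x^j * y^(card I - j) * h j)"
proof -
  define \<tau> where "\<tau> = (\<lambda>S j. if j \<in> I then j \<in> S else undefined)"
  have bij: "bij_betw \<tau> (Pow I) (PiE I (\<lambda>_. UNIV))"
  proof (rule bij_betwI[where g = "\<lambda>a. {j\<in>I. a j}"])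
    show "\<And>a. a \<in> PiE I (\<lambda>_. UNIV) \<Longrightarrow> \<tau> {j\<in>I. a j} = a"
      by (auto simp: \<tau>_def PiE_def extensional_def fun_eq_iff)
  qed (auto simp: \<tau>_def)
  have "(\<Sum>a\<in>PiE I (\<lambda>_. UNIV). (\<Prod>j\<in>I. if a j then x else y) * h (card {j\<in>I. a j}))
      = (\<Sum>S\<in>Pow I. (\<Prod>j\<in>I. if \<tau> S j then x else y) * h (card {j\<in>I. \<tau> S j}))"
    by (rule sum.reindex_bij_betw[OF bij, symmetric])
  also have "\<dots> = (\<Sum>S\<in>Pow I. x ^ card S * y ^ (card I - card S) * h (card S))"
  proof (rule sum.cong[OF refl])
    fix S assume S: "S \<in> Pow I"
    then have "finite S" using fin finite_subset by auto
    have "(\<Prod>j\<in>I. if \<tau> S j then x else y) = (\<Prod>j\<in>I. if j \<in> S then x else y)"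
      by (rule prod.cong) (auto simp: \<tau>_def)
    also have "\<dots> = (\<Prod>j\<in>I \<inter> {j. j\<in>S}. x) * (\<Prod>j\<in>I \<inter> - {j. j\<in>S}. y)"
      by (rule prod.If_cases[OF fin])
    also have "\<dots> = x ^ card S * y ^ (card I - card S)"
      using S fin \<open>finite S\<close> by (simp add: Int_absorb1 Diff_eq[symmetric] card_Diff_subset)
    moreover have "{j\<in>I. \<tau> S j} = S" using S by (auto simp: \<tau>_def)
    ultimately show "(\<Prod>j\<in>I. if \<tau> S j then x else y) * h (card {j\<in>I. \<tau> S j})
        = x ^ card S * y ^ (card I - card S) * h (card S)" by simp
  qed
  also have "\<dots> = (\<Sum>j\<le>card I. \<Sum>S\<in>{S. S \<subseteq> I \<and> card S = j}. x^j * y^(card I - j) * h j)"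
    by (subst sum.group[symmetric, of _ _ card]) (auto simp: fin card_mono intro!: sum.cong)
  also have "\<dots> = (\<Sum>j\<le>card I. real (card I choose j) * x^j * y^(card I - j) * h j)"
    by (simp add: n_subsets[OF fin] mult.assoc)
  finally show ?thesis .
qed

lemma sum_PiE_split_at:
  fixes F :: "(nat \<Rightarrow> bool) \<Rightarrow> real"
  assumes "i \<in> A"
  shows "(\<Sum>a\<in>PiE A (\<lambda>_. UNIV). F a) = (\<Sum>v\<in>UNIV. \<Sum>g\<in>PiE (A - {i}) (\<lambda>_. UNIV). F (g(i := v)))"
proof -
  have "A = insert i (A - {i})" using assms by auto
  then have "(\<Sum>a\<in>PiE A (\<lambda>_. UNIV). F a)
      = (\<Sum>a\<in>(\<lambda>(v, g). g(i := v)) ` (UNIV \<times> PiE (A - {i}) (\<lambda>_. UNIV)). F a)"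
    by (metis PiE_insert_eq)
  also have "\<dots> = (\<Sum>x\<in>UNIV \<times> PiE (A - {i}) (\<lambda>_. UNIV). F ((\<lambda>(v, g). g(i := v)) x))"
    by (rule sum.reindex[unfolded comp_def]) (rule inj_combinator[where T="\<lambda>_. UNIV", simplified], simp)
  finally show ?thesis
    by (simp add: sum.cartesian_product case_prod_beta')
qed

lemma sum_profiles_pivotal:
  fixes \<pi> :: "nat \<Rightarrow> bool \<Rightarrow> real"
  assumes i: "i < n" and B: "1 \<le> B"
    and \<pi>: "\<And>j. j < n \<Longrightarrow> j \<noteq> i \<Longrightarrow> \<pi> j True = r \<and> \<pi> j False = 1 - r"
  shows "(\<Sum>a\<in>profiles n. (if a i \<and> B \<le> card {j\<in>{..<n}. a j} then c else 0) * (\<Prod>j<n. \<pi> j (a j)))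
       = c * \<pi> i True * binomial_tail (n - 1) (B - 1) r"
proof -
  let ?I = "{..<n} - {i}"
  let ?P = "\<lambda>g. (\<Prod>j\<in>?I. if g j then r else 1 - r)"
  have "(\<Sum>a\<in>profiles n. (if a i \<and> B \<le> card {j\<in>{..<n}. a j} then c else 0) * (\<Prod>j<n. \<pi> j (a j)))
      = (\<Sum>g\<in>PiE ?I (\<lambda>_. UNIV). (if B \<le> card {j\<in>{..<n}. (g(i := True)) j} then c else 0)
           * (\<Prod>j<n. \<pi> j ((g(i := True)) j)))"
    unfolding profiles_def using i by (subst sum_PiE_split_at[of i]) (simp_all add: UNIV_bool)
  also have "\<dots> = (\<Sum>g\<in>PiE ?I (\<lambda>_. UNIV). c * \<pi> i True * (?P g * (if B - 1 \<le> card {j\<in>?I. g j} then 1 else 0)))"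
  proof (rule sum.cong[OF refl])
    fix g
    have "{j\<in>{..<n}. (g(i := True)) j} = insert i {j\<in>?I. g j}" using i by auto
    then have "card {j\<in>{..<n}. (g(i := True)) j} = Suc (card {j\<in>?I. g j})" by simp
    moreover have "(\<Prod>j<n. \<pi> j ((g(i := True)) j)) = \<pi> i True * (\<Prod>j\<in>?I. \<pi> j (g j))"
      using i by (subst prod.remove[of _ i]) (auto intro!: prod.cong)
    moreover have "(\<Prod>j\<in>?I. \<pi> j (g j)) = ?P g"
      by (rule prod.cong) (use \<pi> in auto)
    ultimately show "(if B \<le> card {j\<in>{..<n}. (g(i := True)) j} then c else 0) * (\<Prod>j<n. \<pi> j ((g(i := True)) j))
        = c * \<pi> i True * (?P g * (if B - 1 \<le> card {j\<in>?I. g j} then 1 else 0))"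
      using B by auto
  qed
  also have "\<dots> = c * \<pi> i True * (\<Sum>g\<in>PiE ?I (\<lambda>_. UNIV). ?P g * (if B - 1 \<le> card {j\<in>?I. g j} then 1 else 0))"
    by (simp add: sum_distrib_left)
  also have "(\<Sum>g\<in>PiE ?I (\<lambda>_. UNIV). ?P g * (if B - 1 \<le> card {j\<in>?I. g j} then 1 else 0))
      = (\<Sum>j\<le>n - 1. real (n - 1 choose j) * r^j * (1-r)^(n - 1 - j) * (if B - 1 \<le> j then 1 else 0))"
    using sum_PiE_bool_by_card[of ?I r "1 - r" "\<lambda>j. if B - 1 \<le> j then 1 else 0"] i by simp
  also have "\<dots> = binomial_tail (n - 1) (B - 1) r"
    unfolding binomial_tail_def by (rule sum.mono_neutral_cong_right) auto
  finally show ?thesis .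
qed

definition act_prob :: "real \<Rightarrow> (bool \<Rightarrow> real) \<Rightarrow> bool \<Rightarrow> real" where
  "act_prob p f w = (\<Sum>s\<in>UNIV. (if s = w then p else 1 - p) * f s)"

definition signal_gain :: "real \<Rightarrow> nat \<Rightarrow> nat \<Rightarrow> (bool \<Rightarrow> real) \<Rightarrow> bool \<Rightarrow> real" where
  "signal_gain p m k f s =
     (if s then p else 1 - p) * binomial_tail m k (act_prob p f True)
   - (if s then 1 - p else p) * binomial_tail m k (act_prob p f False)"

lemma cf_EU_deviation:
  assumes i: "i < n" and B: "1 \<le> B"
  shows "cf_EU p B n ((\<lambda>_. f)(i := t)) i
       = 1/2 * (\<Sum>s\<in>UNIV. t s * signal_gain p (n - 1) (B - 1) f s)"
proof -
  define sg where "sg = (\<lambda>_::nat. f)(i := t)"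
  define \<pi> where "\<pi> = (\<lambda>w j v. \<Sum>x\<in>UNIV. (if x = w then p else 1 - p) * (if v then sg j x else 1 - sg j x))"
  have sum_s: "(\<Sum>s\<in>profiles n. cf_prob p n sg w s a) = 1/2 * (\<Prod>j<n. \<pi> w j (a j))" for w a
    unfolding cf_prob_def profiles_def \<pi>_def
    by (simp add: prod_sum_PiE prod.distrib sum_distrib_left mult.assoc)
  have \<pi>_other: "\<pi> w j True = act_prob p f w \<and> \<pi> w j False = 1 - act_prob p f w" if "j \<noteq> i" for w j
    using that by (cases w) (auto simp: \<pi>_def sg_def act_prob_def UNIV_bool algebra_simps)
  have "(\<Sum>s\<in>profiles n. \<Sum>a\<in>profiles n. cf_prob p n sg w s a * cf_payoff B n i w a)
      = (\<Sum>a\<in>profiles n. (if a i \<and> B \<le> card {j\<in>{..<n}. a j} then 1/2 * (if w then 1 else -1) else 0)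
           * (\<Prod>j<n. \<pi> w j (a j)))" for w
  proof -
    have "(\<Sum>s\<in>profiles n. \<Sum>a\<in>profiles n. cf_prob p n sg w s a * cf_payoff B n i w a)
        = (\<Sum>a\<in>profiles n. cf_payoff B n i w a * (\<Sum>s\<in>profiles n. cf_prob p n sg w s a))"
      by (subst sum.swap) (simp add: sum_distrib_left mult.commute)
    then show ?thesis
      by (auto simp: sum_s cf_payoff_def intro!: sum.cong)
  qed
  also have "\<dots> w = 1/2 * (if w then 1 else -1) * \<pi> w i True
      * binomial_tail (n - 1) (B - 1) (act_prob p f w)" for w
    by (rule sum_profiles_pivotal[OF i B]) (use \<pi>_other in auto)
  finally show ?thesis
    unfolding cf_EU_def sg_def[symmetric]
    by (simp add: UNIV_bool \<pi>_def sg_def act_prob_def signal_gain_def field_simps)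
qed

section \<open>Symmetric non-trivial equilibria\<close>

definition best_reply :: "(bool \<Rightarrow> real) \<Rightarrow> (bool \<Rightarrow> real) \<Rightarrow> bool" where
  "best_reply G f \<longleftrightarrow> (\<forall>s. (0 < G s \<longrightarrow> f s = 1) \<and> (G s < 0 \<longrightarrow> f s = 0))"

lemma best_reply_iff:
  fixes G :: "bool \<Rightarrow> real"
  assumes f: "strat f"
  shows "(\<forall>t. strat t \<longrightarrow> (\<Sum>s\<in>UNIV. t s * G s) \<le> (\<Sum>s\<in>UNIV. f s * G s)) \<longleftrightarrow> best_reply G f"
  unfolding best_reply_def
proof safe
  have f01: "0 \<le> f s" "f s \<le> 1" for s
    using f by (auto simp: strat_def)
  assume best: "\<forall>t. strat t \<longrightarrow> (\<Sum>s\<in>UNIV. t s * G s) \<le> (\<Sum>s\<in>UNIV. f s * G s)"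
  have deviate: "v * G s \<le> f s * G s" if "0 \<le> v" "v \<le> 1" for s v
  proof -
    have "strat (f(s := v))"
      using f that by (auto simp: strat_def)
    with best have "(\<Sum>s'\<in>UNIV. (f(s := v)) s' * G s') \<le> (\<Sum>s'\<in>UNIV. f s' * G s')"
      by blast
    then show ?thesis
      by (cases s) (simp_all add: UNIV_bool)
  qed
  fix s
  show "f s = 1" if "0 < G s"
    using deviate[of 1 s] f01[of s] that by simp
  show "f s = 0" if "G s < 0"
    using deviate[of 0 s] f01[of s] that by (simp add: zero_le_mult_iff)
next
  fix t assume signs: "\<forall>s. (0 < G s \<longrightarrow> f s = 1) \<and> (G s < 0 \<longrightarrow> f s = 0)" and "strat t"
  have "t s * G s \<le> f s * G s" for s
    using signs[rule_format, of s] \<open>strat t\<close>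
    by (cases "G s" "0 :: real" rule: linorder_cases)
      (auto simp: strat_def mult_le_0_iff mult_left_le_one_le)
  then show "(\<Sum>s\<in>UNIV. t s * G s) \<le> (\<Sum>s\<in>UNIV. f s * G s)"
    by (rule sum_mono)
qed

lemma cf_BNE_symmetric_iff:
  assumes "1 \<le> n" "1 \<le> B"
  shows "cf_BNE p B n (\<lambda>_. f) \<longleftrightarrow> strat f \<and> best_reply (signal_gain p (n - 1) (B - 1) f) f"
proof -
  let ?U = "\<lambda>t. \<Sum>s\<in>UNIV. t s * signal_gain p (n - 1) (B - 1) f s"
  have EU_le_iff: "cf_EU p B n ((\<lambda>_. f)(i := t)) i \<le> cf_EU p B n (\<lambda>_. f) i \<longleftrightarrow> ?U t \<le> ?U f"
    if "i < n" for i t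
  proof -
    have "(\<lambda>_::nat. f)(i := f) = (\<lambda>_. f)"
      by (rule ext) simp
    then have "cf_EU p B n (\<lambda>_. f) i = cf_EU p B n ((\<lambda>_. f)(i := f)) i"
      by simp
    then show ?thesis
      unfolding cf_EU_deviation[OF that \<open>1 \<le> B\<close>] by simp
  qed
  have "(\<forall>i<n. Q) \<longleftrightarrow> Q" for Q
    using \<open>1 \<le> n\<close> by (metis One_nat_def Suc_le_lessD)
  then have "cf_BNE p B n (\<lambda>_. f) \<longleftrightarrow> strat f \<and> (\<forall>t. strat t \<longrightarrow> ?U t \<le> ?U f)"
    unfolding cf_BNE_def by (simp add: EU_le_iff cong: conj_cong)
  then show ?thesis
    using best_reply_iff[of f "signal_gain p (n - 1) (B - 1) f"] by blast
qed

lemma cf_nontrivial_imp_active: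
  assumes "cf_nontrivial p B n (\<lambda>_. f)" "1 \<le> B"
  shows "f True \<noteq> 0 \<or> f False \<noteq> 0"
proof (rule ccontr)
  assume "\<not> (f True \<noteq> 0 \<or> f False \<noteq> 0)"
  then have f0: "f s = 0" for s by (cases s) auto
  have "cf_prob p n (\<lambda>_. f) w s a = 0" if "B \<le> card {j\<in>{..<n}. a j}" for w s a
  proof -
    have "{j\<in>{..<n}. a j} \<noteq> {}"
      using that \<open>1 \<le> B\<close> by (metis card.empty le_0_eq not_one_le_zero)
    then obtain j where "j < n" "a j"
      by auto
    then have "(\<Prod>i<n. if a i then f (s i) else 1 - f (s i)) = 0"
      by (intro prod_zero) (auto simp: f0)
    then show ?thesis unfolding cf_prob_def by simp
  qed
  then show False
    using assms(1) unfolding cf_nontrivial_def by simp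
qed

lemma cf_nontrivial_if_sure_after_H:
  assumes "B \<le> n" "strat f" "f True = 1" "0 < p" "p \<le> 1"
  shows "cf_nontrivial p B n (\<lambda>_. f)"
proof -
  define a0 where "a0 = (\<lambda>j::nat. if j < n then True else undefined)"
  let ?A = "{a\<in>profiles n. B \<le> card {j\<in>{..<n}. a j}}"
  let ?P = "cf_prob p n (\<lambda>_. f)"
  have a0: "a0 \<in> profiles n" "a0 \<in> ?A"
    using \<open>B \<le> n\<close> unfolding a0_def profiles_def by auto
  have fin: "finite (profiles n)"
    unfolding profiles_def by (intro finite_PiE) auto
  have nonneg: "0 \<le> ?P w s a" for w s a
    unfolding cf_prob_def using assms by (intro mult_nonneg_nonneg prod_nonneg) (auto simp: strat_def)
  have "0 < ?P True a0 a0"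
    using assms unfolding cf_prob_def a0_def by simp
  also have "\<dots> \<le> (\<Sum>a\<in>?A. ?P True a0 a)"
    by (rule member_le_sum[OF a0(2)]) (use nonneg fin in auto)
  also have "\<dots> \<le> (\<Sum>s\<in>profiles n. \<Sum>a\<in>?A. ?P True s a)"
    by (rule member_le_sum[OF a0(1), where f="\<lambda>s. \<Sum>a\<in>?A. ?P True s a"])
      (use nonneg fin in \<open>auto intro: sum_nonneg\<close>)
  also have "\<dots> \<le> (\<Sum>w\<in>UNIV. \<Sum>s\<in>profiles n. \<Sum>a\<in>?A. ?P w s a)"
    by (rule member_le_sum[where f="\<lambda>w. \<Sum>s\<in>profiles n. \<Sum>a\<in>?A. ?P w s a"])
      (use nonneg in \<open>auto intro!: sum_nonneg\<close>)
  finally show ?thesis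
    unfolding cf_nontrivial_def .
qed

lemma act_prob_simps:
  "act_prob p f True = p * f True + (1 - p) * f False"
  "act_prob p f False = (1 - p) * f True + p * f False"
  by (simp_all add: act_prob_def UNIV_bool)

lemma act_prob_bounds:
  assumes "strat f" "0 \<le> p" "p \<le> 1"
  shows "0 \<le> act_prob p f w" "act_prob p f w \<le> 1"
proof -
  have f: "0 \<le> f s" "f s \<le> 1" for s
    using assms(1) by (auto simp: strat_def)
  have "p * f True + (1 - p) * f False \<le> p * 1 + (1 - p) * 1"
    "(1 - p) * f True + p * f False \<le> (1 - p) * 1 + p * 1"
    using assms f by (intro add_mono mult_left_mono; simp)+
  then show "0 \<le> act_prob p f w" "act_prob p f w \<le> 1"
    using assms f by (cases w; simp add: act_prob_simps)+
qed

lemma signal_gain_diff: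
  "signal_gain p m k f True - signal_gain p m k f False
     = (2 * p - 1) * (binomial_tail m k (act_prob p f True) + binomial_tail m k (act_prob p f False))"
  unfolding signal_gain_def by (simp add: algebra_simps)

lemma signal_gain_True_lower:
  assumes "strat f" "f False \<le> f True" "1/2 \<le> p" "p \<le> 1" "k \<le> m"
  shows "(2 * p - 1) * binomial_tail m k (act_prob p f True) \<le> signal_gain p m k f True"
proof -
  let ?QH = "binomial_tail m k (act_prob p f True)" and ?QL = "binomial_tail m k (act_prob p f False)"
  have "act_prob p f False \<le> act_prob p f True"
  proof -
    have "(1 - p) * (f True - f False) \<le> p * (f True - f False)"
      using assms by (intro mult_right_mono) auto
    then show ?thesis
      by (simp add: act_prob_simps algebra_simps)
  qed
  then have "?QL \<le> ?QH"
    using act_prob_bounds[OF assms(1)] assms by (intro binomial_tail_mono) auto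
  then have "(1 - p) * ?QL \<le> (1 - p) * ?QH"
    using assms by (intro mult_left_mono) auto
  then show ?thesis
    unfolding signal_gain_def by (simp add: algebra_simps)
qed

definition low_gain :: "real \<Rightarrow> nat \<Rightarrow> nat \<Rightarrow> real \<Rightarrow> real" where
  "low_gain p m k b = (1 - p) * binomial_tail m k (p + (1 - p) * b) - p * binomial_tail m k (1 - p + p * b)"

lemma signal_gain_False_eq_low_gain:
  "f True = 1 \<Longrightarrow> signal_gain p m k f False = low_gain p m k (f False)"
  by (simp add: signal_gain_def low_gain_def act_prob_simps algebra_simps)

lemma low_gain_at_1: "k \<le> m \<Longrightarrow> low_gain p m k 1 = 1 - 2 * p"
  by (simp add: low_gain_def binomial_tail_at_1)

definition eq_low_mix :: "real \<Rightarrow> nat \<Rightarrow> nat \<Rightarrow> real \<Rightarrow> bool" where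
  "eq_low_mix p m k b \<longleftrightarrow> 0 \<le> b \<and> b < 1 \<and> low_gain p m k b \<le> 0 \<and> (0 < b \<longrightarrow> low_gain p m k b = 0)"

lemma contribution_prob_bounds:
  fixes p b :: real
  assumes "1/2 < p" "p < 1" "0 \<le> b" "b \<le> 1"
  shows "0 < 1 - p + p * b" "1 - p + p * b \<le> p + (1 - p) * b" "p + (1 - p) * b \<le> 1"
    and "b < 1 \<Longrightarrow> 1 - p + p * b < p + (1 - p) * b" "b < 1 \<Longrightarrow> p + (1 - p) * b < 1"
proof -
  have gap: "p + (1 - p) * b - (1 - p + p * b) = (2 * p - 1) * (1 - b)"
    by (simp add: algebra_simps)
  have "0 \<le> (2 * p - 1) * (1 - b)" "0 \<le> p * b" "(1 - p) * b \<le> 1 - p"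
    using assms by (simp_all add: mult_left_le)
  then show "0 < 1 - p + p * b" "1 - p + p * b \<le> p + (1 - p) * b" "p + (1 - p) * b \<le> 1"
    using gap assms by linarith+
  assume "b < 1"
  then have "0 < (2 * p - 1) * (1 - b)" "(1 - p) * b < 1 - p"
    using assms by simp_all
  then show "1 - p + p * b < p + (1 - p) * b" "p + (1 - p) * b < 1"
    using gap by linarith+
qed

text \<open>Raising \<open>b\<close> moves the two contribution probabilities closer together; by log-concavity
  of the tail the ratio of the two tails then increases.\<close>

lemma low_tail_ratio_strict_mono:
  assumes k: "1 \<le> k" "k \<le> m" and p: "1/2 < p" "p < 1" and b: "0 \<le> b1" "b1 < b2" "b2 \<le> 1"
  shows "binomial_tail m k (1 - p + p * b1) / binomial_tail m k (p + (1 - p) * b1)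
       < binomial_tail m k (1 - p + p * b2) / binomial_tail m k (p + (1 - p) * b2)"
proof -
  define R where "R = (\<lambda>b. binomial_tail m k (1 - p + p * b) / binomial_tail m k (p + (1 - p) * b))"
  have QH_pos: "0 < binomial_tail m k (p + (1 - p) * x)" if "0 \<le> x" "x \<le> 1" for x
    using binomial_tail_pos[OF k(2)] contribution_prob_bounds[OF p that] by simp
  have "R b1 < R b2"
  proof (rule DERIV_pos_imp_increasing_open[of b1 b2 R])
    have "binomial_tail m k (p + (1 - p) * x) \<noteq> 0" if "x \<in> {b1..b2}" for x
      using QH_pos[of x] that b by auto
    then show "continuous_on {b1..b2} R"
      unfolding R_def
      by (intro continuous_on_divide continuous_on_compose2[OF continuous_on_binomial_tail]
          continuous_intros) auto
    fix x assume "b1 < x" "x < b2"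
    then have x: "0 \<le> x" "x \<le> 1" "x < 1" using b by auto
    define rL rH where "rL = 1 - p + p * x" and "rH = p + (1 - p) * x"
    have r: "0 < rL" "rL \<le> rH" "rH < 1" "0 < rH" "rL < 1"
      using contribution_prob_bounds[OF p x(1,2)] x(3) unfolding rL_def rH_def by auto
    let ?Q = "binomial_tail m k" and ?\<phi> = "binomial_density m k"
    have "(R has_real_derivative (?\<phi> rL * p * ?Q rH - ?Q rL * (?\<phi> rH * (1 - p))) / (?Q rH * ?Q rH)) (at x)"
      unfolding R_def rL_def rH_def using QH_pos[OF x(1,2)]
      by (intro DERIV_divide DERIV_chain2[OF binomial_tail_has_real_derivative[OF k(2)]])
        (auto intro!: derivative_eq_intros)
    moreover have "0 < ?\<phi> rL * p * ?Q rH - ?Q rL * (?\<phi> rH * (1 - p))"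
    proof -
      have pos: "0 < ?\<phi> rH * ?Q rL"
        using binomial_density_pos[OF k r(4,3)] binomial_tail_pos[OF k(2) r(1)] r by simp
      then have "(1 - p) * (?\<phi> rH * ?Q rL) < p * (?\<phi> rH * ?Q rL)"
        using p by (intro mult_strict_right_mono) auto
      also have "\<dots> \<le> p * (?\<phi> rL * ?Q rH)"
        using binomial_tail_log_concave[OF k r(1,2,3)] p by simp
      finally show ?thesis by (simp add: algebra_simps)
    qed
    moreover have "0 < ?Q rH * ?Q rH"
      using binomial_tail_pos[OF k(2) r(4)] r by simp
    ultimately show "\<exists>y. (R has_real_derivative y) (at x) \<and> 0 < y"
      by (blast intro: divide_pos_pos)
  qed (use b in simp)
  then show ?thesis
    unfolding R_def .
qed

lemma low_gain_neg_mono: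
  assumes k: "k \<le> m" and p: "1/2 < p" "p < 1" and b: "0 \<le> b1" "b1 < b2" "b2 \<le> 1"
    and gain_b1: "low_gain p m k b1 \<le> 0"
  shows "low_gain p m k b2 < 0"
proof (cases "k = 0")
  case True
  then show ?thesis using p by (simp add: low_gain_def)
next
  case False
  define QH QL where "QH b = binomial_tail m k (p + (1 - p) * b)"
    and "QL b = binomial_tail m k (1 - p + p * b)" for b
  have QH_pos: "0 < QH b" if "0 \<le> b" "b \<le> 1" for b
    unfolding QH_def using binomial_tail_pos[OF k] contribution_prob_bounds[OF p that] by simp
  have gain: "low_gain p m k b = QH b * ((1 - p) - p * (QL b / QH b))" if "0 \<le> b" "b \<le> 1" for b
    unfolding low_gain_def QH_def[symmetric] QL_def[symmetric]
    using QH_pos[OF that] by (simp add: algebra_simps)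
  have "QL b1 / QH b1 < QL b2 / QH b2"
    unfolding QH_def QL_def using low_tail_ratio_strict_mono[OF _ k p b] False by simp
  then have "p * (QL b1 / QH b1) < p * (QL b2 / QH b2)"
    using p by (intro mult_strict_left_mono) auto
  moreover have "(1 - p) - p * (QL b1 / QH b1) \<le> 0"
    using gain_b1 gain[of b1] QH_pos[of b1] b by (simp add: mult_le_0_iff)
  ultimately have "(1 - p) - p * (QL b2 / QH b2) < 0"
    by linarith
  then show ?thesis
    using gain[of b2] QH_pos[of b2] b by (simp add: mult_pos_neg)
qed

lemma eq_low_mix_unique:
  assumes "k \<le> m" "1/2 < p" "p < 1" "eq_low_mix p m k b1" "eq_low_mix p m k b2"
  shows "b1 = b2"
proof -
  have "\<not> b < b'" if "eq_low_mix p m k b" "eq_low_mix p m k b'" for b b'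
  proof
    assume "b < b'"
    with that have "low_gain p m k b' < 0"
      by (intro low_gain_neg_mono[OF assms(1-3), of b]) (auto simp: eq_low_mix_def)
    with that \<open>b < b'\<close> show False
      by (auto simp: eq_low_mix_def)
  qed
  with assms(4,5) show ?thesis
    by (meson linorder_neqE)
qed

lemma eq_low_mix_exists:
  assumes "k \<le> m" "1/2 < p" "p < 1"
  shows "\<exists>b. eq_low_mix p m k b"
proof (cases "low_gain p m k 0 \<le> 0")
  case True
  then show ?thesis by (auto simp: eq_low_mix_def)
next
  case False
  have "low_gain p m k 1 < 0"
    using assms by (simp add: low_gain_at_1)
  moreover have "continuous_on {0..1} (low_gain p m k)"
    unfolding low_gain_def[abs_def]
    by (intro continuous_intros continuous_on_compose2[OF continuous_on_binomial_tail]) auto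
  ultimately obtain b where "0 \<le> b" "b \<le> 1" "low_gain p m k b = 0"
    using IVT2'[of "low_gain p m k" 1 0 0] False by auto
  moreover from this have "b \<noteq> 1"
    using \<open>low_gain p m k 1 < 0\<close> by auto
  ultimately show ?thesis
    by (auto simp: eq_low_mix_def)
qed

lemma eq_low_mix_le:
  assumes "k \<le> m" "1/2 < p" "p < 1" "eq_low_mix p m k l" "0 \<le> b" "b \<le> 1" "low_gain p m k b < 0"
  shows "l \<le> b"
proof (rule ccontr)
  assume "\<not> l \<le> b"
  with assms have "low_gain p m k l < 0"
    by (intro low_gain_neg_mono[OF assms(1-3), of b]) (auto simp: eq_low_mix_def)
  with \<open>\<not> l \<le> b\<close> assms(4,5) show False
    by (auto simp: eq_low_mix_def)
qed

lemma eq_low_mix_gt: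
  assumes "k \<le> m" "1/2 < p" "p < 1" "eq_low_mix p m k l" "b \<le> 1" "0 < low_gain p m k b"
  shows "b < l"
proof (rule ccontr)
  assume "\<not> b < l"
  then consider "l = b" | "l < b" by linarith
  then show False
  proof cases
    case 1
    with assms(4,6) show False by (auto simp: eq_low_mix_def)
  next
    case 2
    with assms have "low_gain p m k b < 0"
      by (intro low_gain_neg_mono[OF assms(1-3), of l]) (auto simp: eq_low_mix_def)
    with assms(6) show False by simp
  qed
qed

lemma best_reply_sure_after_H:
  assumes f: "strat f" and reply: "best_reply (signal_gain p m k f) f"
    and active: "f True \<noteq> 0 \<or> f False \<noteq> 0" and km: "k \<le> m" and p: "1/2 < p" "p < 1"
  shows "f True = 1"
proof (rule ccontr)
  let ?G = "signal_gain p m k f"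
  let ?QH = "binomial_tail m k (act_prob p f True)"
  let ?QL = "binomial_tail m k (act_prob p f False)"
  have f01: "0 \<le> f s" "f s \<le> 1" for s
    using f by (auto simp: strat_def)
  have QH_pos: "0 < ?QH"
  proof (rule binomial_tail_pos[OF km _ act_prob_bounds(2)[OF f]])
    have "0 \<le> p * f True" "0 \<le> (1 - p) * f False"
      using f01 p by simp_all
    moreover have "0 < p * f True \<or> 0 < (1 - p) * f False"
      using active f01[of True] f01[of False] p by auto
    ultimately show "0 < act_prob p f True"
      unfolding act_prob_simps by linarith
  qed (use p in auto)
  assume "f True \<noteq> 1"
  then have G_H: "?G True \<le> 0"
    using reply by (meson best_reply_def not_le)
  moreover have "0 < (2 * p - 1) * (?QH + ?QL)"
    using act_prob_bounds[OF f] QH_pos p by (intro mult_pos_pos add_pos_nonneg binomial_tail_nonneg) auto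
  ultimately have "?G False < 0"
    using signal_gain_diff[of p m k f] by linarith
  then have "f False = 0"
    using reply by (simp add: best_reply_def)
  then have "(2 * p - 1) * ?QH \<le> ?G True"
    using signal_gain_True_lower[OF f _ _ _ km] f01[of True] p by simp
  moreover have "0 < (2 * p - 1) * ?QH"
    using QH_pos p by simp
  ultimately show False
    using G_H by linarith
qed

lemma best_reply_imp_eq_low_mix:
  assumes reply: "best_reply (signal_gain p m k f) f" and f: "strat f" and fT: "f True = 1"
    and km: "k \<le> m" and p: "1/2 < p"
  shows "eq_low_mix p m k (f False)"
proof -
  have "(0 < signal_gain p m k f False \<longrightarrow> f False = 1) \<and> (signal_gain p m k f False < 0 \<longrightarrow> f False = 0)"
    using reply unfolding best_reply_def by blast
  then have signs: "0 < low_gain p m k (f False) \<Longrightarrow> f False = 1" "low_gain p m k (f False) < 0 \<Longrightarrow> f False = 0"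
    unfolding signal_gain_False_eq_low_gain[of f p m k, OF fT] by auto
  moreover have "f False \<noteq> 1"
    using signs(2) low_gain_at_1[OF km] p by force
  moreover have "0 \<le> f False" "f False \<le> 1"
    using f by (auto simp: strat_def)
  ultimately show ?thesis
    unfolding eq_low_mix_def by force
qed

lemma eq_low_mix_imp_best_reply:
  assumes fT: "f True = 1" and mix: "eq_low_mix p m k (f False)"
    and km: "k \<le> m" and p: "1/2 < p" "p \<le> 1"
  shows "strat f" and "best_reply (signal_gain p m k f) f"
proof -
  show f: "strat f"
    unfolding strat_def
  proof
    fix s show "0 \<le> f s \<and> f s \<le> 1"
      using fT mix by (cases s) (auto simp: eq_low_mix_def)
  qed
  have "0 \<le> (2 * p - 1) * binomial_tail m k (act_prob p f True)"
    using act_prob_bounds[OF f] p by (intro mult_nonneg_nonneg binomial_tail_nonneg) auto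
  also have "\<dots> \<le> signal_gain p m k f True"
    using signal_gain_True_lower[OF f _ _ _ km] fT mix p by (simp add: eq_low_mix_def)
  finally have "0 \<le> signal_gain p m k f True" .
  moreover have "signal_gain p m k f False \<le> 0" "signal_gain p m k f False < 0 \<Longrightarrow> f False = 0"
    using mix unfolding signal_gain_False_eq_low_gain[of f p m k, OF fT] by (auto simp: eq_low_mix_def)
  ultimately show "best_reply (signal_gain p m k f) f"
    unfolding best_reply_def using fT by (metis (full_types) not_le)
qed

lemma sym_nt_BNE_iff:
  assumes B: "1 \<le> B" "B \<le> n" and p: "1/2 < p" "p < 1"
  shows "sym_nt_BNE p B n f \<longleftrightarrow> f True = 1 \<and> eq_low_mix p (n - 1) (B - 1) (f False)"
proof -
  have km: "B - 1 \<le> n - 1" and n: "1 \<le> n"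
    using B by auto
  note BNE = cf_BNE_symmetric_iff[OF n B(1)]
  show ?thesis
  proof
    assume "sym_nt_BNE p B n f"
    then have f: "strat f" and reply: "best_reply (signal_gain p (n - 1) (B - 1) f) f"
      and "f True \<noteq> 0 \<or> f False \<noteq> 0"
      using BNE cf_nontrivial_imp_active[OF _ B(1)] unfolding sym_nt_BNE_def by auto
    with km p have "f True = 1"
      by (intro best_reply_sure_after_H)
    with reply f km p show "f True = 1 \<and> eq_low_mix p (n - 1) (B - 1) (f False)"
      by (auto intro: best_reply_imp_eq_low_mix)
  next
    assume "f True = 1 \<and> eq_low_mix p (n - 1) (B - 1) (f False)"
    with km p have "strat f" "best_reply (signal_gain p (n - 1) (B - 1) f) f" "f True = 1"
      using eq_low_mix_imp_best_reply[of f p "n - 1" "B - 1"] by auto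
    then show "sym_nt_BNE p B n f"
      unfolding sym_nt_BNE_def BNE using cf_nontrivial_if_sure_after_H[OF B(2)] p by auto
  qed
qed

lemma cf_lambda_eq_low_mix:
  assumes B: "1 \<le> B" "B \<le> n" and p: "1/2 < p" "p < 1"
  shows "eq_low_mix p (n - 1) (B - 1) (cf_lambda p B n)"
proof -
  have km: "B - 1 \<le> n - 1"
    using B by simp
  obtain b where b: "eq_low_mix p (n - 1) (B - 1) b"
    using eq_low_mix_exists[OF km p] by blast
  define f where "f s = (if s then 1 else b)" for s :: bool
  have "(THE f. sym_nt_BNE p B n f) = f"
  proof (rule the_equality)
    show "sym_nt_BNE p B n f"
      using b by (simp add: sym_nt_BNE_iff[OF B p] f_def)
    fix g assume "sym_nt_BNE p B n g"
    then have "g True = 1" "g False = b"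
      using eq_low_mix_unique[OF km p _ b] by (auto simp: sym_nt_BNE_iff[OF B p])
    then show "g = f"
    proof (intro ext)
      fix s show "g s = f s"
        using \<open>g True = 1\<close> \<open>g False = b\<close> by (cases s) (simp_all add: f_def)
    qed
  qed
  then show ?thesis
    using b by (simp add: cf_lambda_def f_def)
qed

section \<open>Large games\<close>

lemma tendsto_ratio_pred:
  fixes a :: "nat \<Rightarrow> nat"
  assumes lim: "(\<lambda>n. real (a n) / real n) \<longlonglongrightarrow> q" and a: "eventually (\<lambda>n. 1 \<le> a n) sequentially"
  shows "(\<lambda>n. real (a n - 1) / real (n - 1)) \<longlonglongrightarrow> q"
proof -
  have "(\<lambda>n. (real (a n) / real n - 1 / real n) / (1 - 1 / real n)) \<longlonglongrightarrow> (q - 0) / (1 - 0)"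
    by (intro tendsto_intros lim) simp
  moreover have "eventually (\<lambda>n. (real (a n) / real n - 1 / real n) / (1 - 1 / real n)
      = real (a n - 1) / real (n - 1)) sequentially"
    using a eventually_ge_at_top[of 2]
  proof eventually_elim
    case (elim n)
    then show ?case by (simp add: of_nat_diff field_simps)
  qed
  ultimately show ?thesis
    by (simp add: Lim_transform_eventually)
qed

context
  fixes p q :: real and m k :: "'a \<Rightarrow> nat" and l :: "'a \<Rightarrow> real" and F :: "'a filter"
  assumes p: "1/2 < p" "p < 1"
    and m: "filterlim m at_top F"
    and km: "((\<lambda>x. real (k x) / real (m x)) \<longlongrightarrow> q) F"
    and k_le_m: "eventually (\<lambda>x. k x \<le> m x) F"
    and mix: "eventually (\<lambda>x. eq_low_mix p (m x) (k x) (l x)) F"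
begin

lemma eq_low_mix_eventually_lt:
  assumes a: "0 < a" "q < 1 - p + p * a"
  shows "eventually (\<lambda>x. l x < a) F"
proof (cases "1 \<le> a")
  case True
  from mix show ?thesis
    by eventually_elim (use True in \<open>auto simp: eq_low_mix_def\<close>)
next
  case False
  define c where "c = max 0 ((q - (1 - p)) / p)"
  define b where "b = (c + a) / 2"
  have "(q - (1 - p)) / p < a"
    using a p by (simp add: pos_divide_less_eq mult.commute)
  then have c: "0 \<le> c" "(q - (1 - p)) / p \<le> c" "c < a"
    using a by (auto simp: c_def)
  then have b: "0 \<le> b" "b < a" "b \<le> 1"
    using False unfolding b_def by auto
  have "c < b"
    using c by (simp add: b_def)
  with c have "(q - (1 - p)) / p < b"
    by linarith
  with p have "q < 1 - p + p * b"
    by (simp add: pos_divide_less_eq mult.commute)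
  note b = b this
  have "((\<lambda>x. p * binomial_tail (m x) (k x) (1 - p + p * b)) \<longlongrightarrow> p * 1) F"
    using contribution_prob_bounds[OF p b(1,3)]
    by (intro tendsto_mult tendsto_const binomial_tail_tendsto_1[OF m km]) (use b in auto)
  then have "eventually (\<lambda>x. 1 - p < p * binomial_tail (m x) (k x) (1 - p + p * b)) F"
    by (rule order_tendstoD) (use p in simp)
  with k_le_m mix show ?thesis
  proof eventually_elim
    case (elim x)
    have "(1 - p) * binomial_tail (m x) (k x) (p + (1 - p) * b) \<le> 1 - p"
      using contribution_prob_bounds[OF p b(1,3)] p by (intro mult_left_le binomial_tail_le_1) auto
    also note elim(3)
    finally have "low_gain p (m x) (k x) b < 0"
      unfolding low_gain_def by simp
    then have "l x \<le> b"
      by (rule eq_low_mix_le[OF elim(1) p elim(2) b(1,3)])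
    with b show ?case by simp
  qed
qed

lemma eq_low_mix_eventually_gt_interior:
  assumes q: "q < 1" and a: "0 \<le> a" "1 - p + p * a < q"
  shows "eventually (\<lambda>x. a < l x) F"
proof -
  define L where "L = (q - (1 - p)) / p"
  define c where "c = max a ((q - p) / (1 - p))"
  define b where "b = (c + L) / 2"
  have "a < L"
    using a p by (simp add: L_def field_simps)
  moreover have "(q - p) / (1 - p) < L"
  proof -
    have "(q - (1 - p)) * (1 - p) - (q - p) * p = (1 - q) * (2 * p - 1)"
      by (simp add: algebra_simps)
    moreover have "0 < (1 - q) * (2 * p - 1)"
      using q p by simp
    ultimately have "(q - p) * p < (q - (1 - p)) * (1 - p)"
      by linarith
    then show ?thesis
      using p unfolding L_def by (simp add: field_simps)
  qed
  ultimately have "c < b" "b < L"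
    by (simp_all add: b_def c_def)
  moreover have "L \<le> 1"
    using q p by (simp add: L_def field_simps)
  ultimately have b: "a < b" "0 \<le> b" "b \<le> 1" and "b < (q - (1 - p)) / p" "(q - p) / (1 - p) < b"
    using a unfolding c_def L_def by auto
  with p have "1 - p + p * b < q" "q < p + (1 - p) * b"
    by (simp_all add: pos_less_divide_eq pos_divide_less_eq mult.commute)
  then have "((\<lambda>x. low_gain p (m x) (k x) b) \<longlongrightarrow> (1 - p) * 1 - p * 0) F"
    unfolding low_gain_def using contribution_prob_bounds[OF p b(2,3)]
    by (intro tendsto_intros binomial_tail_tendsto_1[OF m km] binomial_tail_tendsto_0[OF m km]) auto
  then have "eventually (\<lambda>x. 0 < low_gain p (m x) (k x) b) F"
    by (rule order_tendstoD) (use p in simp)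
  with k_le_m mix show ?thesis
  proof eventually_elim
    case (elim x)
    with b(1) eq_low_mix_gt[OF elim(1) p elim(2) b(3) elim(3)] show ?case
      by linarith
  qed
qed

text \<open>For \<open>q = 1\<close> both tails tend to \<open>0\<close>, and only their ratio can be controlled.\<close>

lemma eq_low_mix_eventually_gt_at_1:
  assumes q: "q = 1" and a: "0 \<le> a" "a < 1"
  shows "eventually (\<lambda>x. a < l x) F"
proof -
  define b where "b = (a + 1) / 2"
  have b: "a < b" "0 \<le> b" "b < 1"
    using a unfolding b_def by auto
  define rL rH where "rL = 1 - p + p * b" and "rH = p + (1 - p) * b"
  have r: "0 < rL" "rL < rH" "rH < 1"
    using contribution_prob_bounds[OF p b(2) less_imp_le[OF b(3)]] b(3) unfolding rL_def rH_def by auto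
  define X where "X x = (rL / rH)^k x * ((1 - rL) / (1 - rH))^(m x - k x)" for x
  have "(X \<longlongrightarrow> 0) F"
    unfolding X_def by (rule likelihood_ratio_tendsto_0[OF m _ k_le_m]) (use km q r in auto)
  then have "eventually (\<lambda>x. X x < (1 - p) / p) F"
    by (rule order_tendstoD) (use p in simp)
  with k_le_m mix show ?thesis
  proof eventually_elim
    case (elim x)
    have QH_pos: "0 < binomial_tail (m x) (k x) rH"
      using binomial_tail_pos[OF elim(1)] r by simp
    have "p * binomial_tail (m x) (k x) rL \<le> p * (X x * binomial_tail (m x) (k x) rH)"
      unfolding X_def using binomial_tail_ratio_le[of rL rH "m x" "k x"] r p
      by (intro mult_left_mono) auto
    also have "\<dots> = (p * X x) * binomial_tail (m x) (k x) rH"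
      by (simp only: mult.assoc)
    also have "\<dots> < (1 - p) * binomial_tail (m x) (k x) rH"
      using elim(3) QH_pos p by (intro mult_strict_right_mono) (simp_all add: pos_less_divide_eq mult.commute)
    finally have "0 < low_gain p (m x) (k x) b"
      unfolding low_gain_def rL_def rH_def by simp
    with b(1) eq_low_mix_gt[OF elim(1) p elim(2) less_imp_le[OF b(3)]] show ?case
      by linarith
  qed
qed

end

lemma low_mix_limit_bounds:
  fixes p q a :: real
  assumes p: "0 < p"
  shows "(if q \<le> 1 - p then 0 else (q - (1 - p)) / p) < a \<longleftrightarrow> 0 < a \<and> q < 1 - p + p * a"
    and "0 \<le> a \<Longrightarrow> a < (if q \<le> 1 - p then 0 else (q - (1 - p)) / p) \<longleftrightarrow> 1 - p + p * a < q"
proof -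
  have "0 < a \<longleftrightarrow> 0 < p * a" "0 \<le> a \<longleftrightarrow> 0 \<le> p * a"
    using p by (simp_all add: zero_less_mult_iff zero_le_mult_iff)
  moreover have "(q - (1 - p)) / p < a \<longleftrightarrow> q < 1 - p + p * a" "a < (q - (1 - p)) / p \<longleftrightarrow> 1 - p + p * a < q"
    using p by (simp_all add: pos_divide_less_eq pos_less_divide_eq algebra_simps)
  ultimately show "(if q \<le> 1 - p then 0 else (q - (1 - p)) / p) < a \<longleftrightarrow> 0 < a \<and> q < 1 - p + p * a"
    "0 \<le> a \<Longrightarrow> a < (if q \<le> 1 - p then 0 else (q - (1 - p)) / p) \<longleftrightarrow> 1 - p + p * a < q"
    by auto
qed

lemma eq_low_mix_tendsto:
  fixes m k :: "'a \<Rightarrow> nat" and l :: "'a \<Rightarrow> real"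
  assumes p: "1/2 < p" "p < 1" and q: "q \<le> 1"
    and m: "filterlim m at_top F"
    and km: "((\<lambda>x. real (k x) / real (m x)) \<longlongrightarrow> q) F"
    and k_le_m: "eventually (\<lambda>x. k x \<le> m x) F"
    and mix: "eventually (\<lambda>x. eq_low_mix p (m x) (k x) (l x)) F"
  shows "(l \<longlongrightarrow> (if q \<le> 1 - p then 0 else (q - (1 - p)) / p)) F"
proof (rule order_tendstoI)
  fix a assume "(if q \<le> 1 - p then 0 else (q - (1 - p)) / p) < a"
  with p have "0 < a" "q < 1 - p + p * a"
    by (simp_all add: low_mix_limit_bounds)
  then show "eventually (\<lambda>x. l x < a) F"
    by (rule eq_low_mix_eventually_lt[OF p m km k_le_m mix])
next
  fix a assume a: "a < (if q \<le> 1 - p then 0 else (q - (1 - p)) / p)"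
  show "eventually (\<lambda>x. a < l x) F"
  proof (cases "a < 0")
    case True
    from mix show ?thesis
      by eventually_elim (use True in \<open>auto simp: eq_low_mix_def\<close>)
  next
    case False
    with a p have a': "0 \<le> a" "1 - p + p * a < q"
      by (simp_all add: low_mix_limit_bounds)
    show ?thesis
    proof (cases "q = 1")
      case True
      with a' p have "a < 1" by simp
      with True a' show ?thesis
        by (intro eq_low_mix_eventually_gt_at_1[OF p m km k_le_m mix])
    next
      case False
      with q have "q < 1" by simp
      with a' show ?thesis
        by (intro eq_low_mix_eventually_gt_interior[OF p m km k_le_m mix])
    qed
  qed
qed

theorem lemma2:
  fixes p q :: real and Bs :: "nat \<Rightarrow> nat"
  assumes "1/2 < p" and "p < 1"
    and "\<And>n. n \<ge> 1 \<Longrightarrow> 1 \<le> Bs n \<and> Bs n \<le> n"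
    and "0 \<le> q" and "q \<le> 1"
    and "(\<lambda>n. real (Bs n) / real n) \<longlonglongrightarrow> q"
  shows "(\<lambda>n. cf_lambda p (Bs n) n) \<longlonglongrightarrow>
           (if q \<le> 1 - p then 0 else (q - (1 - p)) / p)"
proof (rule eq_low_mix_tendsto[OF assms(1,2,5) filterlim_minus_const_nat_at_top])
  have B: "eventually (\<lambda>n. 1 \<le> Bs n \<and> Bs n \<le> n) sequentially"
    using eventually_ge_at_top[of 1] by eventually_elim (use assms(3) in auto)
  have "eventually (\<lambda>n. 1 \<le> Bs n) sequentially"
    using B by eventually_elim auto
  then show "(\<lambda>n. real (Bs n - 1) / real (n - 1)) \<longlonglongrightarrow> q"
    by (rule tendsto_ratio_pred[OF assms(6)])
  show "eventually (\<lambda>n. Bs n - 1 \<le> n - 1) sequentially"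
    using B by eventually_elim auto
  show "eventually (\<lambda>n. eq_low_mix p (n - 1) (Bs n - 1) (cf_lambda p (Bs n) n)) sequentially"
    using B by eventually_elim (use cf_lambda_eq_low_mix assms(1,2) in auto)
qed

end
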